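(* Let $H(s)=K\,\frac{\prod_{i=1}^{m}(s-z_i)}{\prod_{i=1}^{n}(s-p_i)}$ be a rational function with real coefficients, $K>0$, $m\leq n$, zeros $z\in\mathbb{C}^m$ and poles $p\in\mathbb{C}^n$, where $p_1,\dots,p_{n_r}$ are real and $p_{n_r+1},\dots,p_n$ are non-real (occurring in complex-conjugate pairs). For $\mu\in\mathbb{N}=\{1,2,\dots\}$ and $\delta>-\min_{i,j}\{\operatorname{Re}(p_i),\operatorname{Re}(z_j)\}$ define $\theta_i=\angle(p_i+\delta)$ ($1\le i\le n$), $\phi_j=\angle(z_j+\delta)$ ($1\le j\le m$), and $w,v\in\mathbb{R}^{n+m}$ by $w_i=(p_i+\delta)^\mu$ for $1\le i\le n_r$, $w_i=0$ for $n_r+1\le i\le n+m$; $v_i=0$ for $1\le i\le n_r$, $v_i=|p_i+\delta|^\mu$ for $n_r+1\le i\le n$, $v_i=|z_{i-n}+\delta|^\mu$ for $n+1\le i\le n+m$. If for some such $\mu$ and $\delta$ we have $w\succ_w v$ and $$\sum_{i=1}^n w_i^{k/\mu}+\sum_{i=1}^n v_i^{k/\mu}\cos(\theta_i k)\;\geq\;\sum_{i=n+1}^{n+m} v_i^{k/\mu}\cos(\phi_{i-n}k)\quad\text{for all }k\in\{1,\dots,\mu-1\},$$ then $H$ is logarithmically completely monotonic.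
   Context: $\angle(\cdot)$ denotes the argument (angle) of a complex number. For $x\in\mathbb{R}^N$, $x^{\downarrow}$ is the vector of its components sorted in descending order; $x\succ_w y$ means $\sum_{i=1}^k x^{\downarrow}_i\geq\sum_{i=1}^k y^{\downarrow}_i$ for all $k=1,\dots,N$. $H$ is logarithmically completely monotonic (LCM) if $H(s)>0$ and $(-1)^k[\log H(s)]^{(k)}\geq 0$ for all $k\in\{1,2,\dots\}$ and all $s\in(\sigma(H),+\infty)$, where $\sigma(H)=\max_i\operatorname{Re}(p_i)$. *)

theory Defs
  imports "HOL-Analysis.Analysis" "HOL-Computational_Algebra.Polynomial"
begin

definition ratfun :: "real \<Rightarrow> complex list \<Rightarrow> complex list \<Rightarrow> complex \<Rightarrow> complex" where
  "ratfun K z p s = complex_of_real K * prod_list (map (\<lambda>zi. s - zi) z) / prod_list (map (\<lambda>pi. s - pi) p)"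

definition root_poly :: "complex list \<Rightarrow> complex poly" where
  "root_poly xs = prod_list (map (\<lambda>x. [:- x, 1:]) xs)"

definition weakly_majorizes :: "real list \<Rightarrow> real list \<Rightarrow> bool" where
  "weakly_majorizes x y \<longleftrightarrow> length x = length y \<and>
     (\<forall>k\<in>{1..length x}. sum_list (take k (rev (sort y))) \<le> sum_list (take k (rev (sort x))))"

text \<open>Logarithmic complete monotonicity of H on (sigma(H), +infinity), sigma(H) = max Re p_i
  (the whole real line when there are no poles).\<close>
definition log_compl_mono :: "(complex \<Rightarrow> complex) \<Rightarrow> complex list \<Rightarrow> bool" where
  "log_compl_mono H p \<longleftrightarrow>
     (\<forall>s::real. (\<forall>q\<in>set p. Re q < s) \<longrightarrow> H (of_real s) \<in> \<real> \<and> Re (H (of_real s)) > 0) \<and>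
     (\<forall>k::nat. k \<ge> 1 \<longrightarrow> (\<forall>s::real. (\<forall>q\<in>set p. Re q < s) \<longrightarrow>
        (-1) ^ k * (deriv ^^ k) (\<lambda>x. ln (Re (H (of_real x)))) s \<ge> 0))"

text \<open>The vectors w, v in R^(n+m) (0-based indices; nr = number of real poles).\<close>
definition wvec :: "nat \<Rightarrow> complex list \<Rightarrow> complex list \<Rightarrow> nat \<Rightarrow> real \<Rightarrow> real list" where
  "wvec nr p z \<mu> \<delta> = map (\<lambda>i. if i < nr then Re ((p ! i + of_real \<delta>) ^ \<mu>) else 0)
                          [0..<length p + length z]"

definition vvec :: "nat \<Rightarrow> complex list \<Rightarrow> complex list \<Rightarrow> nat \<Rightarrow> real \<Rightarrow> real list" where
  "vvec nr p z \<mu> \<delta> = map (\<lambda>i. if i < nr then 0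
                               else if i < length p then cmod (p ! i + of_real \<delta>) ^ \<mu>
                               else cmod (z ! (i - length p) + of_real \<delta>) ^ \<mu>)
                          [0..<length p + length z]"

end

(*
  Put a_i = p_i + \<delta>, b_j = z_j + \<delta> and, for s > max Re p_i, t = s + \<delta>. The first
  partial-sum inequality of w \<succ>_w v bounds every entry of v by the largest entry of w,
  which is below t^\<mu>; hence |a_i| < t and |b_j| < t, and in particular all zeros lie
  left of s. Expanding 1/(s - c)^k = 1/(t - (c + \<delta>))^k in powers of c + \<delta>, whose
  coefficients are nonnegative, gives
    (-1)^k (ln H)^(k)(s)
      = (k-1)! \<Sum>_N C(N+k-1, N) t^-(N+k) (\<Sum>_i Re a_i^N - \<Sum>_j Re b_j^N),
  so it suffices that the real parts of the power sums of the a_i dominate those of the b_j.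
  For N = 0 this is m \<le> n, for 0 < N < \<mu> it is the cosine hypothesis, and for N \<ge> \<mu>
  it follows from Karamata's inequality for the convex function x^(N/\<mu>), because
  Re a_i^N \<ge> w_i^(N/\<mu>) - v_i^(N/\<mu>) and Re b_j^N \<le> v_(n+j)^(N/\<mu>). Finally H(s) > 0
  since numerator and denominator are monic real polynomials without roots in [s, \<infinity>).
*)

theory Submission
  imports Defs
begin

lemma sum_list_map_conv_sum_nth: "(\<Sum>x\<leftarrow>xs. f x) = (\<Sum>i<length xs. f (xs ! i))"
  by (simp add: sum_list_sum_nth atLeast0LessThan)

lemma sum_list_take_conv_sum_nth:
  "k \<le> length xs \<Longrightarrow> sum_list (take k xs) = (\<Sum>i<k. xs ! i)"
  by (induction k) (auto simp: take_Suc_conv_app_nth)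

lemma sum_lessThan_add_split:
  fixes f :: "nat \<Rightarrow> 'a::comm_monoid_add"
  shows "(\<Sum>i<m + n. f i) = (\<Sum>i<m. f i) + (\<Sum>j<n. f (m + j))"
  by (induction n) (simp_all add: add.assoc)

lemma prod_list_map_conv_prod_nth: "(\<Prod>x\<leftarrow>xs. f x) = (\<Prod>i<length xs. f (xs ! i))"
  by (simp add: prod.list_conv_set_nth atLeast0LessThan)

section \<open>Weak majorization and Karamata's inequality\<close>

lemma powr_ge_tangent:
  fixes a b q :: real
  assumes "0 \<le> a" "0 \<le> b" "1 \<le> q"
  shows "b powr q + q * b powr (q - 1) * (a - b) \<le> a powr q"
proof (cases "b = 0")
  case True
  then show ?thesis using assms by (cases "q = 1") auto
next
  case b: False
  show ?thesis
  proof (cases "a = 0")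
    case True
    have "b powr q = b powr (q - 1) * b"
      using b assms by (simp add: powr_diff)
    then have "b powr q + q * b powr (q - 1) * (a - b) = (1 - q) * b powr q"
      using True by (simp add: algebra_simps)
    also have "\<dots> \<le> 0"
      using assms by (simp add: mult_nonpos_nonneg)
    finally show ?thesis using True by simp
  next
    case False
    have "q * b powr (q - 1) * (a - b) \<le> a powr q - b powr q"
      using assms b False
      by (intro convex_on_imp_above_tangent[OF powr_convex[OF assms(3)]])
         (auto intro!: has_field_derivative_at_within has_real_derivative_powr
               simp: interior_open)
    then show ?thesis by simp
  qed
qed

lemma abel_summation_nonneg:
  fixes c d :: "nat \<Rightarrow> real"
  assumes partial: "\<And>k. k \<le> L \<Longrightarrow> 0 \<le> (\<Sum>i<k. d i)"
    and dec: "\<And>i. c (Suc i) \<le> c i" and nonneg: "\<And>i. 0 \<le> c i"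
  shows "0 \<le> (\<Sum>i<L. c i * d i)"
proof -
  have "N \<le> L \<longrightarrow> c N * (\<Sum>i<N. d i) \<le> (\<Sum>i<N. c i * d i)" for N
  proof (induction N)
    case (Suc N)
    show ?case
    proof
      assume N: "Suc N \<le> L"
      have "c (Suc N) * (\<Sum>i<Suc N. d i) \<le> c N * (\<Sum>i<Suc N. d i)"
        using dec partial[OF N] by (simp add: mult_right_mono)
      also have "\<dots> = c N * (\<Sum>i<N. d i) + c N * d N"
        by (simp add: algebra_simps)
      also have "\<dots> \<le> (\<Sum>i<N. c i * d i) + c N * d N"
        using Suc N by simp
      finally show "c (Suc N) * (\<Sum>i<Suc N. d i) \<le> (\<Sum>i<Suc N. c i * d i)"
        by simp
    qed
  qed simp
  moreover have "0 \<le> c L * (\<Sum>i<L. d i)"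
    using partial nonneg by simp
  ultimately show ?thesis by fastforce
qed

lemma sum_powr_le_of_partial_sums:
  fixes X Y :: "nat \<Rightarrow> real" and q :: real
  assumes partial: "\<And>k. k \<le> L \<Longrightarrow> (\<Sum>i<k. Y i) \<le> (\<Sum>i<k. X i)"
    and Y_dec: "\<And>i. Suc i < L \<Longrightarrow> Y (Suc i) \<le> Y i"
    and X_nonneg: "\<And>i. i < L \<Longrightarrow> 0 \<le> X i" and Y_nonneg: "\<And>i. i < L \<Longrightarrow> 0 \<le> Y i"
    and q: "1 \<le> q"
  shows "(\<Sum>i<L. Y i powr q) \<le> (\<Sum>i<L. X i powr q)"
proof -
  define c where "c i = (if i < L then q * Y i powr (q - 1) else 0)" for i
  have "0 \<le> (\<Sum>i<L. c i * (X i - Y i))"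
  proof (rule abel_summation_nonneg)
    show "0 \<le> (\<Sum>i<k. X i - Y i)" if "k \<le> L" for k
      using partial[OF that] by (simp add: sum_subtractf)
    show "0 \<le> c i" for i
      using q by (simp add: c_def)
    show "c (Suc i) \<le> c i" for i
    proof (cases "Suc i < L")
      case True
      then have "Y (Suc i) powr (q - 1) \<le> Y i powr (q - 1)"
        using Y_dec Y_nonneg q by (intro powr_mono2) auto
      then show ?thesis using True q by (simp add: c_def)
    qed (use q in \<open>simp add: c_def\<close>)
  qed
  also have "\<dots> \<le> (\<Sum>i<L. X i powr q - Y i powr q)"
  proof (intro sum_mono)
    fix i assume "i \<in> {..<L}"
    then show "c i * (X i - Y i) \<le> X i powr q - Y i powr q"
      using powr_ge_tangent[OF X_nonneg[of i] Y_nonneg[of i] q] by (simp add: c_def)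
  qed
  finally show ?thesis by (simp add: sum_subtractf)
qed

lemma weakly_majorizes_sum_powr_le:
  fixes x y :: "real list" and q :: real
  assumes maj: "weakly_majorizes x y"
    and x_nonneg: "\<forall>a\<in>set x. 0 \<le> a" and y_nonneg: "\<forall>b\<in>set y. 0 \<le> b" and q: "1 \<le> q"
  shows "(\<Sum>b\<leftarrow>y. b powr q) \<le> (\<Sum>a\<leftarrow>x. a powr q)"
proof -
  define X Y L where "X = rev (sort x)" and "Y = rev (sort y)" and "L = length x"
  have len: "length X = L" "length Y = L"
    using maj by (simp_all add: X_def Y_def L_def weakly_majorizes_def)
  have partial: "\<forall>k\<in>{1..L}. sum_list (take k Y) \<le> sum_list (take k X)"
    using maj by (simp add: weakly_majorizes_def X_def Y_def L_def)
  have perm: "(\<Sum>a\<leftarrow>xs. a powr q) = (\<Sum>a\<leftarrow>rev (sort xs). a powr q)" for xs :: "real list"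
    by (simp flip: sum_mset_sum_list)
  have "(\<Sum>i<L. (Y ! i) powr q) \<le> (\<Sum>i<L. (X ! i) powr q)"
  proof (rule sum_powr_le_of_partial_sums)
    show "(\<Sum>i<k. Y ! i) \<le> (\<Sum>i<k. X ! i)" if "k \<le> L" for k
    proof (cases "k = 0")
      case False
      then show ?thesis
        using partial that len by (simp add: sum_list_take_conv_sum_nth)
    qed simp
    show "Y ! Suc i \<le> Y ! i" if "Suc i < L" for i
      using sorted_rev_nth_mono[of Y i "Suc i"] that len by (simp add: Y_def)
    show "0 \<le> X ! i" if "i < L" for i
      using that len x_nonneg nth_mem[of i X] by (simp add: X_def)
    show "0 \<le> Y ! i" if "i < L" for i
      using that len y_nonneg nth_mem[of i Y] by (simp add: Y_def)
  qed fact
  then show ?thesis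
    unfolding perm[of x] perm[of y] using len by (simp add: sum_list_map_conv_sum_nth X_def Y_def)
qed

lemma weakly_majorizes_imp_bounded:
  assumes maj: "weakly_majorizes x y" and b: "b \<in> set y"
  shows "\<exists>a\<in>set x. b \<le> a"
proof -
  have "rev (sort y) \<noteq> []"
    using b by (metis empty_iff list.set(1) set_rev set_sort)
  then obtain b0 Y where Y: "rev (sort y) = b0 # Y"
    by (meson neq_Nil_conv)
  have "rev (sort x) \<noteq> []"
    using maj Y unfolding weakly_majorizes_def
    by (metis length_rev length_sort list.size(3) list.distinct(1) length_0_conv)
  then obtain a0 X where X: "rev (sort x) = a0 # X"
    by (meson neq_Nil_conv)
  obtain j where j: "j < length (b0 # Y)" "(b0 # Y) ! j = b"
    using b Y by (metis in_set_conv_nth set_rev set_sort)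
  have "b \<le> b0"
    using sorted_rev_nth_mono[of "b0 # Y" 0 j] j Y by (metis le0 nth_Cons_0 rev_rev_ident sorted_sort)
  also have "b0 \<le> a0"
  proof -
    have "0 < length x"
      using X by (metis length_greater_0_conv length_rev length_sort list.distinct(1))
    then have "1 \<in> {1..length x}"
      by (simp add: Suc_leI)
    then have "sum_list (take 1 (rev (sort y))) \<le> sum_list (take 1 (rev (sort x)))"
      using maj unfolding weakly_majorizes_def by blast
    then show ?thesis
      using X Y by simp
  qed
  finally show ?thesis
    using X by (metis list.set_intros(1) set_rev set_sort)
qed

section \<open>Power sums of the shifted roots\<close>

lemma Re_power_Arg: "Re (a ^ n) = cmod a ^ n * cos (Arg a * real n)"
proof -
  have "a ^ n = rcis (cmod a) (Arg a) ^ n"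
    by (simp add: rcis_cmod_Arg)
  also have "\<dots> = rcis (cmod a ^ n) (real n * Arg a)"
    by (rule DeMoivre2)
  finally show ?thesis
    by (simp add: mult.commute)
qed

lemma power_powr_divide:
  fixes r :: real
  assumes "0 \<le> r" "1 \<le> n" "1 \<le> m"
  shows "(r ^ m) powr (real n / real m) = r ^ n"
proof (cases "r = 0")
  case False
  then have r: "0 < r"
    using assms by simp
  then have "(r ^ m) powr (real n / real m) = (r powr real m) powr (real n / real m)"
    by (simp add: powr_realpow)
  also have "\<dots> = r powr real n"
    using assms by (simp add: powr_powr)
  also have "\<dots> = r ^ n"
    using r by (simp add: powr_realpow)
  finally show ?thesis .
qed (use assms in \<open>simp add: power_0_left\<close>)

lemma length_wvec [simp]: "length (wvec nr p z \<mu> \<delta>) = length p + length z"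
  by (simp add: wvec_def)

lemma length_vvec [simp]: "length (vvec nr p z \<mu> \<delta>) = length p + length z"
  by (simp add: vvec_def)

lemma nth_wvec:
  "i < length p + length z \<Longrightarrow>
     wvec nr p z \<mu> \<delta> ! i = (if i < nr then Re ((p ! i + of_real \<delta>) ^ \<mu>) else 0)"
  by (simp add: wvec_def)

lemma nth_vvec:
  "i < length p + length z \<Longrightarrow>
     vvec nr p z \<mu> \<delta> ! i = (if i < nr then 0
       else if i < length p then cmod (p ! i + of_real \<delta>) ^ \<mu>
       else cmod (z ! (i - length p) + of_real \<delta>) ^ \<mu>)"
  by (simp add: vvec_def)

lemma add_of_real_eq_of_real_Re: "Im c = 0 \<Longrightarrow> c + of_real \<delta> = of_real (Re c + \<delta>)"
  by (simp add: complex_eq_iff)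

lemma wvec_nonneg:
  assumes "\<forall>i<nr. Im (p ! i) = 0 \<and> 0 < Re (p ! i) + \<delta>"
  shows "\<forall>a\<in>set (wvec nr p z \<mu> \<delta>). 0 \<le> a"
proof
  fix a assume "a \<in> set (wvec nr p z \<mu> \<delta>)"
  then obtain i where "i < length p + length z" "a = wvec nr p z \<mu> \<delta> ! i"
    by (auto simp: in_set_conv_nth)
  then show "0 \<le> a"
    using assms[rule_format, of i] by (auto simp: nth_wvec add_of_real_eq_of_real_Re simp del: of_real_add)
qed

lemma vvec_nonneg: "\<forall>b\<in>set (vvec nr p z \<mu> \<delta>). 0 \<le> b"
  by (auto simp: in_set_conv_nth nth_vvec)

lemma Re_power_shifted_pole:
  assumes "i < length p" "\<forall>i<nr. Im (p ! i) = 0 \<and> 0 < Re (p ! i) + \<delta>" "1 \<le> n" "1 \<le> \<mu>"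
  shows "Re ((p ! i + of_real \<delta>) ^ n) =
    wvec nr p z \<mu> \<delta> ! i powr (real n / real \<mu>)
    + vvec nr p z \<mu> \<delta> ! i powr (real n / real \<mu>) * cos (Arg (p ! i + of_real \<delta>) * real n)"
proof (cases "i < nr")
  case True
  then have "Im (p ! i) = 0" "0 \<le> Re (p ! i) + \<delta>"
    using assms(2) by auto
  then show ?thesis
    using True assms
    by (simp add: nth_wvec nth_vvec add_of_real_eq_of_real_Re power_powr_divide del: of_real_add)
next
  case False
  then show ?thesis
    using assms by (simp add: nth_wvec nth_vvec power_powr_divide Re_power_Arg)
qed

lemma Re_power_shifted_zero:
  assumes "j < length z" "nr \<le> length p" "1 \<le> n" "1 \<le> \<mu>"
  shows "Re ((z ! j + of_real \<delta>) ^ n) =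
    vvec nr p z \<mu> \<delta> ! (length p + j) powr (real n / real \<mu>) * cos (Arg (z ! j + of_real \<delta>) * real n)"
  using assms by (simp add: nth_vvec power_powr_divide Re_power_Arg)

lemma abs_mult_cos_le: "0 \<le> (a::real) \<Longrightarrow> \<bar>a * cos \<theta>\<bar> \<le> a"
  by (simp add: abs_mult mult_left_le)

lemma power_sum_shifted_roots_le_of_weakly_majorizes:
  assumes nr: "nr \<le> length p" and real_poles: "\<forall>i<nr. Im (p ! i) = 0 \<and> 0 < Re (p ! i) + \<delta>"
    and mu: "1 \<le> \<mu>" and n: "\<mu> \<le> n"
    and wmaj: "weakly_majorizes (wvec nr p z \<mu> \<delta>) (vvec nr p z \<mu> \<delta>)"
  shows "(\<Sum>j<length z. Re ((z ! j + of_real \<delta>) ^ n)) \<le> (\<Sum>i<length p. Re ((p ! i + of_real \<delta>) ^ n))"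
proof -
  define N M w v q where "N = length p" and "M = length z" and "w = wvec nr p z \<mu> \<delta>"
    and "v = vvec nr p z \<mu> \<delta>" and "q = real n / real \<mu>"
  have "1 \<le> q"
    using mu n by (simp add: q_def)
  then have "(\<Sum>b\<leftarrow>v. b powr q) \<le> (\<Sum>a\<leftarrow>w. a powr q)"
    unfolding w_def v_def by (intro weakly_majorizes_sum_powr_le wmaj wvec_nonneg real_poles vvec_nonneg)
  moreover have "(\<Sum>a\<leftarrow>w. a powr q) = (\<Sum>i<N. w ! i powr q)"
    using nr by (simp add: sum_list_map_conv_sum_nth sum_lessThan_add_split nth_wvec w_def N_def M_def)
  moreover have "(\<Sum>b\<leftarrow>v. b powr q) = (\<Sum>i<N. v ! i powr q) + (\<Sum>j<M. v ! (N + j) powr q)"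
    by (simp add: sum_list_map_conv_sum_nth sum_lessThan_add_split v_def N_def M_def)
  moreover have "(\<Sum>i<N. w ! i powr q - v ! i powr q) \<le> (\<Sum>i<N. Re ((p ! i + of_real \<delta>) ^ n))"
  proof (intro sum_mono)
    fix i assume "i \<in> {..<N}"
    then have "Re ((p ! i + of_real \<delta>) ^ n) =
        w ! i powr q + v ! i powr q * cos (Arg (p ! i + of_real \<delta>) * real n)"
      using Re_power_shifted_pole[where i=i and n=n and z=z, OF _ real_poles _ mu] mu n
      by (simp add: w_def v_def q_def N_def)
    moreover have "\<bar>v ! i powr q * cos (Arg (p ! i + of_real \<delta>) * real n)\<bar> \<le> v ! i powr q"
      by (simp add: abs_mult_cos_le)
    ultimately show "w ! i powr q - v ! i powr q \<le> Re ((p ! i + of_real \<delta>) ^ n)"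
      by (simp add: abs_le_iff)
  qed
  moreover have "(\<Sum>j<M. Re ((z ! j + of_real \<delta>) ^ n)) \<le> (\<Sum>j<M. v ! (N + j) powr q)"
  proof (intro sum_mono)
    fix j assume "j \<in> {..<M}"
    then have "Re ((z ! j + of_real \<delta>) ^ n) =
        v ! (N + j) powr q * cos (Arg (z ! j + of_real \<delta>) * real n)"
      using Re_power_shifted_zero[where j=j and n=n and z=z, OF _ nr _ mu] mu n
      by (simp add: v_def q_def N_def M_def)
    moreover have "\<bar>v ! (N + j) powr q * cos (Arg (z ! j + of_real \<delta>) * real n)\<bar> \<le> v ! (N + j) powr q"
      by (simp add: abs_mult_cos_le)
    ultimately show "Re ((z ! j + of_real \<delta>) ^ n) \<le> v ! (N + j) powr q"
      by (simp add: abs_le_iff)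
  qed
  ultimately show ?thesis
    by (simp add: sum_subtractf N_def M_def)
qed

lemma power_sum_shifted_roots_le:
  assumes mn: "length z \<le> length p" and nr: "nr \<le> length p"
    and real_poles: "\<forall>i<nr. Im (p ! i) = 0 \<and> 0 < Re (p ! i) + \<delta>" and mu: "1 \<le> \<mu>"
    and wmaj: "weakly_majorizes (wvec nr p z \<mu> \<delta>) (vvec nr p z \<mu> \<delta>)"
    and ineq: "\<forall>k\<in>{1..<\<mu>}.
       (\<Sum>i<length p. (wvec nr p z \<mu> \<delta> ! i) powr (real k / real \<mu>))
       + (\<Sum>i<length p. (vvec nr p z \<mu> \<delta> ! i) powr (real k / real \<mu>)
                         * cos (Arg (p ! i + of_real \<delta>) * real k))
       \<ge> (\<Sum>i\<in>{length p..<length p + length z}.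
             (vvec nr p z \<mu> \<delta> ! i) powr (real k / real \<mu>)
             * cos (Arg (z ! (i - length p) + of_real \<delta>) * real k))"
  shows "(\<Sum>j<length z. Re ((z ! j + of_real \<delta>) ^ n)) \<le> (\<Sum>i<length p. Re ((p ! i + of_real \<delta>) ^ n))"
proof -
  consider "n = 0" | "1 \<le> n" "n < \<mu>" | "\<mu> \<le> n"
    by linarith
  then show ?thesis
  proof cases
    case 1
    then show ?thesis
      using mn by simp
  next
    case 2
    have "(\<Sum>i<length p. Re ((p ! i + of_real \<delta>) ^ n)) =
        (\<Sum>i<length p. wvec nr p z \<mu> \<delta> ! i powr (real n / real \<mu>))
        + (\<Sum>i<length p. vvec nr p z \<mu> \<delta> ! i powr (real n / real \<mu>)
                          * cos (Arg (p ! i + of_real \<delta>) * real n))"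
      using Re_power_shifted_pole[where z=z and \<mu>=\<mu>, OF _ real_poles 2(1) mu]
      by (simp add: sum.distrib)
    moreover have "(\<Sum>j<length z. Re ((z ! j + of_real \<delta>) ^ n)) =
        (\<Sum>i\<in>{length p..<length p + length z}.
             vvec nr p z \<mu> \<delta> ! i powr (real n / real \<mu>)
             * cos (Arg (z ! (i - length p) + of_real \<delta>) * real n))"
      using Re_power_shifted_zero[where \<mu>=\<mu>, OF _ nr 2(1) mu]
      by (simp add: sum.atLeastLessThan_shift_0 atLeast0LessThan)
    moreover have "n \<in> {1..<\<mu>}"
      using 2 by simp
    ultimately show ?thesis
      using ineq by auto
  next
    case 3
    then show ?thesis
      by (rule power_sum_shifted_roots_le_of_weakly_majorizes[OF nr real_poles mu _ wmaj])
  qed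
qed

lemma wvec_less_power:
  assumes "\<forall>i<nr. Im (p ! i) = 0 \<and> 0 < Re (p ! i) + \<delta> \<and> Re (p ! i) + \<delta> < t"
    and "0 < t" and "1 \<le> \<mu>"
  shows "\<forall>a\<in>set (wvec nr p z \<mu> \<delta>). a < t ^ \<mu>"
proof
  fix a assume "a \<in> set (wvec nr p z \<mu> \<delta>)"
  then obtain l where l: "l < length p + length z" "a = wvec nr p z \<mu> \<delta> ! l"
    by (auto simp: in_set_conv_nth)
  show "a < t ^ \<mu>"
  proof (cases "l < nr")
    case True
    then have "a = (Re (p ! l) + \<delta>) ^ \<mu>"
      using l assms(1) by (simp add: nth_wvec add_of_real_eq_of_real_Re del: of_real_add)
    also have "\<dots> < t ^ \<mu>"
      using True assms by (intro power_strict_mono) auto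
    finally show ?thesis .
  qed (use l assms(2) in \<open>simp add: nth_wvec\<close>)
qed

lemma norm_shifted_roots_less:
  assumes mn: "length z \<le> length p" and nr: "nr \<le> length p"
    and real_poles: "\<forall>i<nr. Im (p ! i) = 0" and delta_p: "\<forall>i<length p. 0 < Re (p ! i) + \<delta>"
    and mu: "1 \<le> \<mu>" and wmaj: "weakly_majorizes (wvec nr p z \<mu> \<delta>) (vvec nr p z \<mu> \<delta>)"
    and x: "\<forall>c\<in>set p. Re c < x"
  shows "\<forall>i<length p. cmod (p ! i + of_real \<delta>) < x + \<delta>"
    and "\<forall>j<length z. cmod (z ! j + of_real \<delta>) < x + \<delta>"
proof -
  have pole_less: "Re (p ! i) + \<delta> < x + \<delta>" if "i < length p" for i
    using x that by simp
  have t: "0 < x + \<delta>" if "p \<noteq> []"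
    using pole_less[of 0] delta_p that by fastforce
  have v_less: "b < (x + \<delta>) ^ \<mu>" if "p \<noteq> []" "b \<in> set (vvec nr p z \<mu> \<delta>)" for b
  proof -
    have "\<forall>a\<in>set (wvec nr p z \<mu> \<delta>). a < (x + \<delta>) ^ \<mu>"
      using real_poles delta_p pole_less nr t[OF that(1)] mu by (intro wvec_less_power) auto
    then show ?thesis
      using weakly_majorizes_imp_bounded[OF wmaj that(2)] by fastforce
  qed
  show "\<forall>i<length p. cmod (p ! i + of_real \<delta>) < x + \<delta>"
  proof (intro allI impI)
    fix i assume i: "i < length p"
    then have "p \<noteq> []"
      by auto
    show "cmod (p ! i + of_real \<delta>) < x + \<delta>"
    proof (cases "i < nr")
      case True
      then show ?thesis
        using real_poles delta_p[rule_format, OF i] pole_less[OF i]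
        by (simp add: add_of_real_eq_of_real_Re del: of_real_add)
    next
      case False
      then have "cmod (p ! i + of_real \<delta>) ^ \<mu> < (x + \<delta>) ^ \<mu>"
        using v_less[OF \<open>p \<noteq> []\<close> nth_mem[of i "vvec nr p z \<mu> \<delta>"]] i by (simp add: nth_vvec)
      then show ?thesis
        using t[OF \<open>p \<noteq> []\<close>] by (simp add: power_less_imp_less_base)
    qed
  qed
  show "\<forall>j<length z. cmod (z ! j + of_real \<delta>) < x + \<delta>"
  proof (intro allI impI)
    fix j assume j: "j < length z"
    then have "p \<noteq> []"
      using mn by auto
    then have "cmod (z ! j + of_real \<delta>) ^ \<mu> < (x + \<delta>) ^ \<mu>"
      using v_less[OF _ nth_mem[of "length p + j" "vvec nr p z \<mu> \<delta>"]] j nr by (simp add: nth_vvec)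
    then show "cmod (z ! j + of_real \<delta>) < x + \<delta>"
      using t[OF \<open>p \<noteq> []\<close>] by (simp add: power_less_imp_less_base)
  qed
qed

lemma Re_less_of_norm_shifted_less:
  assumes "\<forall>j<length cs. cmod (cs ! j + of_real \<delta>) < s + \<delta>"
  shows "\<forall>c\<in>set cs. Re c < s"
proof
  fix c assume "c \<in> set cs"
  then obtain j where "j < length cs" "c = cs ! j"
    by (auto simp: in_set_conv_nth)
  then show "Re c < s"
    using assms complex_Re_le_cmod[of "c + of_real \<delta>"] by fastforce
qed

section \<open>Expansion of inverse powers\<close>

lemma sums_inverse_power:
  fixes a :: complex and t :: real
  assumes at: "cmod a < t" and k: "1 \<le> k"
  shows "(\<lambda>n. of_real (real ((k + n - 1) choose n) / t ^ (n + k)) * a ^ n)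
           sums inverse ((of_real t - a) ^ k)"
proof -
  have t: "0 < t"
    using at norm_ge_zero[of a] by linarith
  define w where "w = - a / of_real t"
  have "norm w < 1"
    using at t by (simp add: w_def norm_divide)
  then have "(\<lambda>n. (-1) ^ n * ((of_nat k + of_nat n - 1) gchoose n) * w ^ n)
      sums (1 + w) powr (- of_nat k)"
    by (rule one_plus_neg_powr_powser)
  moreover have "(-1) ^ n * ((of_nat k + of_nat n - 1) gchoose n) * w ^ n
      = of_nat ((k + n - 1) choose n) * (a / of_real t) ^ n" for n
  proof -
    have "(of_nat k + of_nat n - 1 :: complex) = of_nat (k + n - 1)"
      using k by simp
    then show ?thesis
      by (simp add: binomial_gbinomial w_def power_minus_mult flip: power_mult_distrib)
  qed
  moreover have "1 + w \<noteq> 0"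
    using \<open>norm w < 1\<close> by (metis add_eq_0_iff norm_minus_cancel norm_one order_less_irrefl)
  ultimately have "(\<lambda>n. of_nat ((k + n - 1) choose n) * (a / of_real t) ^ n)
      sums inverse ((1 + w) ^ k)"
    by (simp add: powr_minus powr_nat')
  then have "(\<lambda>n. inverse (of_real t ^ k) * (of_nat ((k + n - 1) choose n) * (a / of_real t) ^ n))
      sums (inverse (of_real t ^ k) * inverse ((1 + w) ^ k))"
    by (rule sums_mult)
  moreover have "of_real t * (1 + w) = of_real t - a"
    using t by (simp add: w_def field_simps)
  ultimately show ?thesis
    using t by (simp add: field_simps power_add flip: power_mult_distrib)
qed

lemma Re_sum_inverse_power_le:
  fixes a b :: "'i \<Rightarrow> complex" and t :: real
  assumes a: "\<And>i. i \<in> I \<Longrightarrow> cmod (a i) < t" and b: "\<And>j. j \<in> J \<Longrightarrow> cmod (b j) < t"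
    and power_sums: "\<And>n. (\<Sum>j\<in>J. Re (b j ^ n)) \<le> (\<Sum>i\<in>I. Re (a i ^ n))"
    and k: "1 \<le> k"
  shows "(\<Sum>j\<in>J. Re (inverse ((of_real t - b j) ^ k))) \<le> (\<Sum>i\<in>I. Re (inverse ((of_real t - a i) ^ k)))"
proof (cases "I = {}")
  case True
  then have "card J = 0"
    using power_sums[of 0] by simp
  then show ?thesis
    using True by (metis card_0_eq order_refl sum.empty sum.infinite)
next
  case False
  then have t: "0 < t"
    using a norm_ge_zero by (meson ex_in_conv le_less_trans)
  define C where "C n = real ((k + n - 1) choose n) / t ^ (n + k)" for n
  have "(\<lambda>n. C n * Re (c ^ n)) sums Re (inverse ((of_real t - c) ^ k))" if "cmod c < t" for c
    using sums_Re[OF sums_inverse_power[OF that k]] by (simp add: C_def)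
  then have "(\<lambda>n. \<Sum>j\<in>J. C n * Re (b j ^ n)) sums (\<Sum>j\<in>J. Re (inverse ((of_real t - b j) ^ k)))"
    and "(\<lambda>n. \<Sum>i\<in>I. C n * Re (a i ^ n)) sums (\<Sum>i\<in>I. Re (inverse ((of_real t - a i) ^ k)))"
    using a b by (auto intro!: sums_sum)
  moreover have "(\<Sum>j\<in>J. C n * Re (b j ^ n)) \<le> (\<Sum>i\<in>I. C n * Re (a i ^ n))" for n
  proof -
    have "0 \<le> C n"
      using t by (simp add: C_def)
    then show ?thesis
      unfolding sum_distrib_left[symmetric] by (rule mult_left_mono[OF power_sums])
  qed
  ultimately show ?thesis
    by (rule sums_le[rotated])
qed

section \<open>Positivity on the real axis\<close>

lemma poly_root_poly: "poly (root_poly cs) w = (\<Prod>c\<leftarrow>cs. w - c)"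
  unfolding root_poly_def by (induction cs) (simp_all add: algebra_simps)

lemma lead_coeff_root_poly: "lead_coeff (root_poly cs) = 1"
proof (induction cs)
  case (Cons c cs)
  have "root_poly (c # cs) = [:- c, 1:] * root_poly cs"
    by (simp add: root_poly_def)
  then show ?case
    using Cons by (simp add: lead_coeff_mult del: mult_pCons_left)
qed (simp add: root_poly_def)

lemma poly_map_poly_of_real: "poly (map_poly of_real P) (of_real y) = of_real (poly P y)"
  by (induction P) (simp_all add: map_poly_pCons)

lemma poly_root_poly_of_real_pos:
  assumes real: "\<forall>i. coeff (root_poly cs) i \<in> \<real>" and roots: "\<forall>c\<in>set cs. Re c < x"
  shows "\<exists>r>0. poly (root_poly cs) (of_real x) = of_real r"
proof -
  define Q where "Q = map_poly Re (root_poly cs)"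
  have real_values: "poly (root_poly cs) (of_real y) = of_real (poly Q y)" for y
  proof -
    have "root_poly cs = map_poly of_real Q"
      using real by (intro poly_eqI) (simp add: Q_def coeff_map_poly)
    then show ?thesis
      by (simp add: poly_map_poly_of_real)
  qed
  have no_root: "poly Q y \<noteq> 0" if "x \<le> y" for y
  proof
    assume "poly Q y = 0"
    then have "(\<Prod>c\<leftarrow>cs. of_real y - c) = 0"
      using real_values[of y] by (simp add: poly_root_poly)
    then obtain c where "c \<in> set cs" "Re c = y"
      by (auto simp: prod_list_zero_iff)
    with roots that show False
      by fastforce
  qed
  have "lead_coeff Q = 1"
    by (simp add: Q_def lead_coeff_map_poly_nz lead_coeff_root_poly)
  then obtain Y where Y: "\<And>y. Y \<le> y \<Longrightarrow> 1 \<le> poly Q y"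
    using poly_pinfty_gt_lc[of Q] by auto
  have "0 < poly Q x"
  proof (rule ccontr)
    assume "\<not> 0 < poly Q x"
    then have "poly Q x < 0"
      using no_root[of x] by simp
    moreover have "0 < poly Q (max Y (x + 1))"
      using Y[of "max Y (x + 1)"] by simp
    ultimately obtain y where "x < y" "poly Q y = 0"
      using poly_IVT_pos[of x "max Y (x + 1)" Q] by force
    with no_root show False
      by simp
  qed
  with real_values show ?thesis
    by blast
qed

lemma ratfun_of_real_pos:
  assumes K: "0 < K" and real_num: "\<forall>i. coeff (root_poly z) i \<in> \<real>"
    and real_den: "\<forall>i. coeff (root_poly p) i \<in> \<real>" and roots: "\<forall>c\<in>set z \<union> set p. Re c < x"
  shows "\<exists>h>0. ratfun K z p (of_real x) = of_real h"
proof -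
  obtain rz rp where "0 < rz" "poly (root_poly z) (of_real x) = of_real rz"
    and "0 < rp" "poly (root_poly p) (of_real x) = of_real rp"
    using poly_root_poly_of_real_pos[OF real_num] poly_root_poly_of_real_pos[OF real_den] roots by (meson UnCI)
  then show ?thesis
    using K by (intro exI[of _ "K * rz / rp"]) (simp add: ratfun_def poly_root_poly)
qed

section \<open>Derivatives of the logarithm\<close>

definition ln_dist_deriv :: "complex \<Rightarrow> nat \<Rightarrow> real \<Rightarrow> real" where
  "ln_dist_deriv c k x = (if k = 0 then ln (cmod (of_real x - c))
     else (-1) ^ (k - 1) * fact (k - 1) * Re (inverse ((of_real x - c) ^ k)))"

lemma has_real_derivative_ln_norm_diff:
  assumes "Re c < x"
  shows "((\<lambda>y. ln (cmod (of_real y - c))) has_real_derivative Re (inverse (of_real x - c))) (at x)"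
proof -
  have "of_real x - c \<notin> \<real>\<^sub>\<le>\<^sub>0"
    using assms by (simp add: complex_nonpos_Reals_iff)
  then have "(Ln has_field_derivative inverse (of_real x - c)) (at (of_real x - c))"
    by (rule has_field_derivative_Ln)
  moreover have "((\<lambda>w. w - c) has_field_derivative 1) (at (of_real x))"
    by (rule derivative_eq_intros refl | simp)+
  ultimately have "((\<lambda>w. Ln (w - c)) has_field_derivative inverse (of_real x - c)) (at (of_real x))"
    using DERIV_chain2[of Ln _ "\<lambda>w. w - c"] by fastforce
  then have "((\<lambda>y. Re (Ln (of_real y - c))) has_real_derivative Re (inverse (of_real x - c))) (at x)"
    using has_field_derivative_Re[OF has_vector_derivative_real_field] by fastforce
  then show ?thesis
  proof (rule has_field_derivative_transform_within_open)
    show "Re (Ln (of_real y - c)) = ln (cmod (of_real y - c))" if "y \<in> {Re c<..}" for y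
      using that by (auto simp: complex_eq_iff)
  qed (use assms in auto)
qed

lemma has_real_derivative_Re_inverse_power:
  assumes "of_real x \<noteq> c"
  shows "((\<lambda>y. Re (inverse ((of_real y - c) ^ Suc m))) has_real_derivative
    - real (Suc m) * Re (inverse ((of_real x - c) ^ Suc (Suc m)))) (at x)"
proof -
  let ?u = "of_real x - c"
  have "?u \<noteq> 0"
    using assms by simp
  have power_eq: "u ^ m * inverse ((u ^ Suc m) ^ Suc (Suc 0)) = inverse (u ^ Suc (Suc m))"
    if "u \<noteq> 0" for u :: complex
    using that by (simp add: field_simps flip: power_add power_mult)
  have "((\<lambda>w. (w - c) ^ Suc m) has_field_derivative of_nat (Suc m) * ?u ^ m) (at (of_real x))"
    by (rule derivative_eq_intros refl | simp)+
  then have "((\<lambda>w. inverse ((w - c) ^ Suc m)) has_field_derivative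
      - (of_nat (Suc m) * ?u ^ m * inverse ((?u ^ Suc m) ^ Suc (Suc 0)))) (at (of_real x))"
    using \<open>?u \<noteq> 0\<close> by (intro DERIV_inverse_fun) simp_all
  also have "of_nat (Suc m) * ?u ^ m * inverse ((?u ^ Suc m) ^ Suc (Suc 0))
      = of_nat (Suc m) * inverse (?u ^ Suc (Suc m))"
    using power_eq[OF \<open>?u \<noteq> 0\<close>] by (simp add: mult.assoc)
  finally have "((\<lambda>y. Re (inverse ((of_real y - c) ^ Suc m))) has_real_derivative
      Re (- (of_nat (Suc m) * inverse (?u ^ Suc (Suc m))))) (at x)"
    using has_field_derivative_Re[OF has_vector_derivative_real_field] by fastforce
  moreover have "Re (- (of_nat (Suc m) * R)) = - real (Suc m) * Re R" for R :: complex
    by (simp add: algebra_simps)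
  ultimately show ?thesis
    by (simp only:)
qed

lemma has_real_derivative_ln_dist_deriv:
  assumes "Re c < x"
  shows "(ln_dist_deriv c k has_real_derivative ln_dist_deriv c (Suc k) x) (at x)"
proof (cases k)
  case 0
  then show ?thesis
    using has_real_derivative_ln_norm_diff[OF assms] by (simp add: ln_dist_deriv_def[abs_def])
next
  case (Suc m)
  have "of_real x \<noteq> c"
    using assms by auto
  then have "((\<lambda>y. (-1) ^ m * fact m * Re (inverse ((of_real y - c) ^ Suc m))) has_real_derivative
      (-1) ^ m * fact m * (- real (Suc m) * Re (inverse ((of_real x - c) ^ Suc (Suc m))))) (at x)"
    by (intro DERIV_cmult has_real_derivative_Re_inverse_power)
  moreover have "ln_dist_deriv c (Suc m) = (\<lambda>y. (-1) ^ m * fact m * Re (inverse ((of_real y - c) ^ Suc m)))"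
    by (simp add: ln_dist_deriv_def fun_eq_iff)
  moreover have "(-1) ^ m * fact m * (- real (Suc m) * R) = (-1) ^ Suc m * fact (Suc m) * R" for R
    by (simp add: algebra_simps)
  then have "ln_dist_deriv c (Suc (Suc m)) x
      = (-1) ^ m * fact m * (- real (Suc m) * Re (inverse ((of_real x - c) ^ Suc (Suc m))))"
    by (simp add: ln_dist_deriv_def)
  ultimately show ?thesis
    using Suc by simp
qed

lemma deriv_funpow_eqI:
  fixes f :: "real \<Rightarrow> real" and G :: "nat \<Rightarrow> real \<Rightarrow> real"
  assumes U: "open U" "x \<in> U" and base: "\<And>y. y \<in> U \<Longrightarrow> f y = G 0 y"
    and step: "\<And>k y. y \<in> U \<Longrightarrow> (G k has_real_derivative G (Suc k) y) (at y)"
  shows "(deriv ^^ k) f x = G k x"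
  using U(2)
proof (induction k arbitrary: x)
  case 0
  then show ?case
    by (simp add: base)
next
  case (Suc k)
  have "((deriv ^^ k) f has_real_derivative G (Suc k) x) (at x)"
    by (rule has_field_derivative_transform_within_open[OF step[OF Suc.prems] U(1) Suc.prems])
      (simp add: Suc.IH)
  then show ?case
    by (simp add: DERIV_imp_deriv)
qed

lemma ln_Re_ratfun:
  assumes K: "0 < K" and real_num: "\<forall>i. coeff (root_poly z) i \<in> \<real>"
    and real_den: "\<forall>i. coeff (root_poly p) i \<in> \<real>" and roots: "\<forall>c\<in>set z \<union> set p. Re c < x"
  shows "ln (Re (ratfun K z p (of_real x))) =
    ln K + (\<Sum>j<length z. ln_dist_deriv (z ! j) 0 x) - (\<Sum>i<length p. ln_dist_deriv (p ! i) 0 x)"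
proof -
  have dist_pos: "0 < cmod (of_real x - cs ! i)"
    if "set cs \<subseteq> set z \<union> set p" "i < length cs" for cs i
    using roots nth_mem[OF that(2)] that(1) by (auto simp: complex_eq_iff)
  have prod_pos: "0 < (\<Prod>i<length cs. cmod (of_real x - cs ! i))"
    if "set cs \<subseteq> set z \<union> set p" for cs
    using dist_pos[OF that] by (intro prod_pos) simp
  have ln_prod: "ln (\<Prod>i<length cs. cmod (of_real x - cs ! i)) = (\<Sum>i<length cs. ln_dist_deriv (cs ! i) 0 x)"
    if "set cs \<subseteq> set z \<union> set p" for cs
    using dist_pos[OF that] by (subst ln_prod) (auto simp: ln_dist_deriv_def)
  define A B where "A = (\<Prod>j<length z. cmod (of_real x - z ! j))"
    and "B = (\<Prod>i<length p. cmod (of_real x - p ! i))"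
  obtain h where "0 < h" "ratfun K z p (of_real x) = of_real h"
    using ratfun_of_real_pos[OF K real_num real_den roots] by blast
  then have "Re (ratfun K z p (of_real x)) = cmod (ratfun K z p (of_real x))"
    by simp
  also have "\<dots> = K * A / B"
    using K by (simp add: A_def B_def ratfun_def norm_mult norm_divide prod_list_map_conv_prod_nth prod_norm)
  finally show ?thesis
    using K prod_pos[of z] prod_pos[of p] ln_prod[of z] ln_prod[of p]
    by (simp add: ln_div ln_mult flip: A_def B_def)
qed

lemma higher_deriv_ln_ratfun:
  assumes K: "0 < K" and real_num: "\<forall>i. coeff (root_poly z) i \<in> \<real>"
    and real_den: "\<forall>i. coeff (root_poly p) i \<in> \<real>" and roots: "\<forall>c\<in>set z \<union> set p. Re c < x"
    and k: "1 \<le> k"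
  shows "(deriv ^^ k) (\<lambda>x. ln (Re (ratfun K z p (of_real x)))) x =
    (\<Sum>j<length z. ln_dist_deriv (z ! j) k x) - (\<Sum>i<length p. ln_dist_deriv (p ! i) k x)"
proof -
  define U where "U = {y. \<forall>c\<in>set z \<union> set p. Re c < y}"
  define G where "G k y = (if k = 0 then ln K else 0)
    + (\<Sum>j<length z. ln_dist_deriv (z ! j) k y) - (\<Sum>i<length p. ln_dist_deriv (p ! i) k y)" for k y
  have "U = (\<Inter>c\<in>set z \<union> set p. {Re c<..})"
    by (auto simp: U_def)
  then have "open U"
    by auto
  moreover have "x \<in> U"
    using roots by (simp add: U_def)
  moreover have "ln (Re (ratfun K z p (of_real y))) = G 0 y" if "y \<in> U" for y
    using ln_Re_ratfun[OF K real_num real_den] that by (simp add: U_def G_def)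
  moreover have "(G k has_real_derivative G (Suc k) y) (at y)" if "y \<in> U" for k y
    using that unfolding G_def U_def
    by (auto intro!: derivative_eq_intros has_real_derivative_ln_dist_deriv)
  ultimately have "(deriv ^^ k) (\<lambda>x. ln (Re (ratfun K z p (of_real x)))) x = G k x"
    by (rule deriv_funpow_eqI)
  then show ?thesis
    using k by (simp add: G_def)
qed

lemma neg_one_power_ln_dist_deriv:
  "1 \<le> k \<Longrightarrow> (-1) ^ k * ln_dist_deriv c k x = - (fact (k - 1) * Re (inverse ((of_real x - c) ^ k)))"
  by (cases k) (simp_all add: ln_dist_deriv_def)

lemma neg_one_power_higher_deriv_ln_ratfun_nonneg:
  assumes K: "0 < K" and real_num: "\<forall>i. coeff (root_poly z) i \<in> \<real>"
    and real_den: "\<forall>i. coeff (root_poly p) i \<in> \<real>" and k: "1 \<le> k"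
    and poles: "\<forall>i<length p. cmod (p ! i + of_real \<delta>) < s + \<delta>"
    and zeros: "\<forall>j<length z. cmod (z ! j + of_real \<delta>) < s + \<delta>"
    and power_sums: "\<And>n. (\<Sum>j<length z. Re ((z ! j + of_real \<delta>) ^ n))
      \<le> (\<Sum>i<length p. Re ((p ! i + of_real \<delta>) ^ n))"
  shows "0 \<le> (-1) ^ k * (deriv ^^ k) (\<lambda>x. ln (Re (ratfun K z p (of_real x)))) s"
proof -
  have roots: "\<forall>c\<in>set z \<union> set p. Re c < s"
    using Re_less_of_norm_shifted_less[OF poles] Re_less_of_norm_shifted_less[OF zeros] by blast
  have "(\<Sum>j<length z. Re (inverse ((of_real (s + \<delta>) - (z ! j + of_real \<delta>)) ^ k)))
      \<le> (\<Sum>i<length p. Re (inverse ((of_real (s + \<delta>) - (p ! i + of_real \<delta>)) ^ k)))"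
    using poles zeros power_sums k by (intro Re_sum_inverse_power_le) auto
  then have "0 \<le> fact (k - 1) * ((\<Sum>i<length p. Re (inverse ((of_real s - p ! i) ^ k)))
      - (\<Sum>j<length z. Re (inverse ((of_real s - z ! j) ^ k))))"
    by simp
  also have "\<dots> = (-1) ^ k * (deriv ^^ k) (\<lambda>x. ln (Re (ratfun K z p (of_real x)))) s"
    using k by (simp add: higher_deriv_ln_ratfun[OF K real_num real_den roots k]
        right_diff_distrib sum_distrib_left sum_negf neg_one_power_ln_dist_deriv)
  finally show ?thesis .
qed

theorem corollary1:
  fixes K :: real and z p :: "complex list" and nr \<mu> :: nat and \<delta> :: real
  assumes K_pos: "K > 0"
    and mn: "length z \<le> length p"
    and real_num: "\<forall>i. coeff (root_poly z) i \<in> \<real>"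
    and real_den: "\<forall>i. coeff (root_poly p) i \<in> \<real>"
    and nr_le: "nr \<le> length p"
    and real_poles: "\<forall>i<nr. Im (p ! i) = 0"
    and nonreal_poles: "\<forall>i. nr \<le> i \<and> i < length p \<longrightarrow> Im (p ! i) \<noteq> 0"
    and mu_pos: "\<mu> \<ge> 1"
    and delta_p: "\<forall>i<length p. Re (p ! i) + \<delta> > 0"
    and delta_z: "\<forall>j<length z. Re (z ! j) + \<delta> > 0"
    and wmaj: "weakly_majorizes (wvec nr p z \<mu> \<delta>) (vvec nr p z \<mu> \<delta>)"
    and ineq: "\<forall>k\<in>{1..<\<mu>}.
       (\<Sum>i<length p. (wvec nr p z \<mu> \<delta> ! i) powr (real k / real \<mu>))
       + (\<Sum>i<length p. (vvec nr p z \<mu> \<delta> ! i) powr (real k / real \<mu>)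
                         * cos (Arg (p ! i + of_real \<delta>) * real k))
       \<ge> (\<Sum>i\<in>{length p..<length p + length z}.
             (vvec nr p z \<mu> \<delta> ! i) powr (real k / real \<mu>)
             * cos (Arg (z ! (i - length p) + of_real \<delta>) * real k))"
  shows "log_compl_mono (ratfun K z p) p"
proof -
  have "\<forall>i<nr. Im (p ! i) = 0 \<and> 0 < Re (p ! i) + \<delta>"
    using real_poles delta_p nr_le by auto
  then have power_sums: "(\<Sum>j<length z. Re ((z ! j + of_real \<delta>) ^ n))
      \<le> (\<Sum>i<length p. Re ((p ! i + of_real \<delta>) ^ n))" for n
    using power_sum_shifted_roots_le[OF mn nr_le _ mu_pos wmaj ineq] by blast
  note bounds = norm_shifted_roots_less[OF mn nr_le real_poles delta_p mu_pos wmaj]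
  have "ratfun K z p (of_real s) \<in> \<real> \<and> 0 < Re (ratfun K z p (of_real s))"
    if poles: "\<forall>q\<in>set p. Re q < s" for s
  proof -
    have "\<forall>c\<in>set z \<union> set p. Re c < s"
      using poles Re_less_of_norm_shifted_less[OF bounds(2)[OF poles]] by blast
    then obtain h where "0 < h" "ratfun K z p (of_real s) = of_real h"
      using ratfun_of_real_pos[OF K_pos real_num real_den] by blast
    then show ?thesis
      by simp
  qed
  moreover have "0 \<le> (-1) ^ k * (deriv ^^ k) (\<lambda>x. ln (Re (ratfun K z p (of_real x)))) s"
    if "\<forall>q\<in>set p. Re q < s" and "1 \<le> k" for k s
    using neg_one_power_higher_deriv_ln_ratfun_nonneg[OF K_pos real_num real_den \<open>1 \<le> k\<close>
        bounds[OF that(1)] power_sums] .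
  ultimately show ?thesis
    unfolding log_compl_mono_def by blast
qed

end
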